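(* Let $(X,d)$ be an ultrametric space, let $\mathcal{U}_0=\{X\}$ and $\mathcal{U}_n=\{B(x,\tfrac1n):x\in X\}$ for $n\in\mathbb{N}_+$. Then $\mathcal{A}=\{\mathcal{U}_n\}_{n\in\mathbb{N}}$ is a tame defining sequence of $X$, which is complete if and only if the ultrametric $u_{\mathcal{A}}$ is complete.
   Context: An ultrametric space satisfies $d(x,z)\le\max\{d(x,y),d(y,z)\}$; $B(x,r)$ is the open ball of radius $r$ at $x$. A partition is a cover by pairwise disjoint nonempty clopen sets; $\mathcal{U}[x]$ is the element containing $x$. A defining sequence is a sequence $\{\mathcal{U}_n\}$ of partitions with each element of $\mathcal{U}_{n+1}$ contained in an element of $\mathcal{U}_n$ and $\bigcup_n\mathcal{U}_n$ a basis; complete if nested sequences $U_n\in\mathcal{U}_n$ have nonempty intersection; tame (w.r.t. $d$) if $\sup\{\operatorname{diam}O:O\in\mathcal{U}_n\}\to0$ and for each $n$ there is $\rho_n>0$ with points in distinct elements of $\mathcal{U}_n$ at distance $\ge\rho_n$. $u_{\mathcal{A}}(x,y)=1/(1+j)$, $j=\inf\{n:\mathcal{U}_n[x]\ne\mathcal{U}_n[y]\}$. *)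

theory Defs
  imports "HOL-Analysis.Analysis"
begin

text \<open>The space X is the whole carrier type 'a of class metric_space, with d = dist
  and the metric topology.\<close>

definition ultrametric_space :: "'a::metric_space itself \<Rightarrow> bool" where
  "ultrametric_space _ \<longleftrightarrow> (\<forall>x y z::'a. dist x z \<le> max (dist x y) (dist y z))"

definition is_partition :: "'a::topological_space set set \<Rightarrow> bool" where
  "is_partition U \<longleftrightarrow>
     (\<forall>W\<in>U. W \<noteq> {} \<and> open W \<and> closed W) \<and>
     (\<forall>W\<in>U. \<forall>W'\<in>U. W \<noteq> W' \<longrightarrow> W \<inter> W' = {}) \<and>
     \<Union>U = UNIV"

definition elem_of :: "'a set set \<Rightarrow> 'a \<Rightarrow> 'a set" where
  "elem_of U x = (THE W. W \<in> U \<and> x \<in> W)"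

definition defining_sequence :: "(nat \<Rightarrow> 'a::topological_space set set) \<Rightarrow> bool" where
  "defining_sequence \<U> \<longleftrightarrow>
     (\<forall>n. is_partition (\<U> n)) \<and>
     (\<forall>n. \<forall>W\<in>\<U> (Suc n). \<exists>P\<in>\<U> n. W \<subseteq> P) \<and>
     topological_basis (\<Union>n. \<U> n)"

definition complete_defining_sequence :: "(nat \<Rightarrow> 'a set set) \<Rightarrow> bool" where
  "complete_defining_sequence \<U> \<longleftrightarrow>
     (\<forall>V::nat \<Rightarrow> 'a set. (\<forall>n. V n \<in> \<U> n) \<and> (\<forall>n. V (Suc n) \<subseteq> V n)
        \<longrightarrow> (\<Inter>n. V n) \<noteq> {})"

definition tame_defining_sequence :: "(nat \<Rightarrow> 'a::metric_space set set) \<Rightarrow> bool" where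
  "tame_defining_sequence \<U> \<longleftrightarrow>
     (\<forall>\<epsilon>>0. \<exists>N. \<forall>n\<ge>N. \<forall>W\<in>\<U> n. \<forall>x\<in>W. \<forall>y\<in>W. dist x y \<le> \<epsilon>) \<and>
     (\<forall>n. \<exists>\<rho>>0. \<forall>W\<in>\<U> n. \<forall>W'\<in>\<U> n. W \<noteq> W' \<longrightarrow>
          (\<forall>x\<in>W. \<forall>y\<in>W'. dist x y \<ge> \<rho>))"

definition u_A :: "(nat \<Rightarrow> 'a set set) \<Rightarrow> 'a \<Rightarrow> 'a \<Rightarrow> real" where
  "u_A \<U> x y =
     (if \<exists>n. elem_of (\<U> n) x \<noteq> elem_of (\<U> n) y
      then 1 / (1 + real (LEAST n. elem_of (\<U> n) x \<noteq> elem_of (\<U> n) y))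
      else 0)"

definition u_A_complete :: "(nat \<Rightarrow> 'a set set) \<Rightarrow> bool" where
  "u_A_complete \<U> \<longleftrightarrow>
     (\<forall>f::nat \<Rightarrow> 'a. (\<forall>\<epsilon>>0. \<exists>N. \<forall>m\<ge>N. \<forall>n\<ge>N. u_A \<U> (f m) (f n) < \<epsilon>)
        \<longrightarrow> (\<exists>x. \<forall>\<epsilon>>0. \<exists>N. \<forall>n\<ge>N. u_A \<U> (f n) x < \<epsilon>))"

definition ball_sequence :: "nat \<Rightarrow> 'a::metric_space set set" where
  "ball_sequence n = (if n = 0 then {UNIV} else range (\<lambda>x. ball x (1 / real n)))"

end

theory Submission
  imports Defs
begin

(* In an ultrametric space every point of a ball is a centre of it, so balls of equal radius
   are equal or disjoint, and balls are clopen. Hence the balls of radius 1/n partition X, and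
   x, y lie in the same element iff d(x,y) < 1/n; this gives tameness with rho_n = 1/n, and it
   shows u_A(x,y) < 1/(n+1) iff d(x,y) < 1/n. So u_A and d have the same Cauchy sequences and
   the same limits, and u_A is complete iff d is. The defining sequence is complete iff d is as
   well: points chosen in nested balls of radii 1/n form a Cauchy sequence whose limit lies in
   every (closed) ball, and conversely the balls of radius 1/n containing the tails of a Cauchy
   sequence are nested, and a common point of them is its limit. *)

lemma elem_of_eqI:
  assumes "is_partition U" "W \<in> U" "x \<in> W"
  shows "elem_of U x = W"
  unfolding elem_of_def
proof (rule the_equality)
  fix W' assume "W' \<in> U \<and> x \<in> W'"
  with assms show "W' = W" unfolding is_partition_def by blast
qed (use assms in blast)

lemma u_A_less_iff:
  "u_A U x y < 1 / (1 + real n) \<longleftrightarrow> (\<forall>k\<le>n. elem_of (U k) x = elem_of (U k) y)"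
proof (cases "\<exists>k. elem_of (U k) x \<noteq> elem_of (U k) y")
  case True
  define j where "j = (LEAST k. elem_of (U k) x \<noteq> elem_of (U k) y)"
  have "u_A U x y < 1 / (1 + real n) \<longleftrightarrow> n < j"
    using True by (simp add: u_A_def j_def field_simps)
  also have "\<dots> \<longleftrightarrow> (\<forall>k\<le>n. elem_of (U k) x = elem_of (U k) y)"
    using LeastI_ex[OF True] not_less_Least[of _ "\<lambda>k. elem_of (U k) x \<noteq> elem_of (U k) y"]
    unfolding j_def[symmetric] by (meson le_less_trans not_le)
  finally show ?thesis .
qed (simp add: u_A_def)

lemma Cauchy_tail_ballE:
  assumes "Cauchy f"
  obtains N where "\<And>n m. n > 0 \<Longrightarrow> m \<ge> N n \<Longrightarrow> f m \<in> ball (f (N n)) (1 / real n)"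
proof -
  have "\<forall>n. \<exists>N. n > 0 \<longrightarrow> (\<forall>m\<ge>N. f m \<in> ball (f N) (1 / real n))"
  proof
    fix n :: nat
    show "\<exists>N. n > 0 \<longrightarrow> (\<forall>m\<ge>N. f m \<in> ball (f N) (1 / real n))"
    proof (cases "n > 0")
      case True
      then obtain M where "\<forall>m\<ge>M. \<forall>k\<ge>M. dist (f m) (f k) < 1 / real n"
        using assms metric_CauchyD[of f "1 / real n"] by auto
      then show ?thesis
        by (intro exI[of _ M]) simp
    qed simp
  qed
  from choice[OF this] show ?thesis
    using that by blast
qed

context
  assumes ultrametric: "ultrametric_space TYPE('a::metric_space)"
begin

lemma ultrametric_dist_le: "dist (x::'a) z \<le> max (dist x y) (dist y z)"
  using ultrametric unfolding ultrametric_space_def by blast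

lemma ultrametric_ball_eq:
  assumes "(y::'a) \<in> ball x r"
  shows "ball y r = ball x r"
proof -
  have sub: "ball v r \<subseteq> ball u r" if "v \<in> ball u r" for u v :: 'a
  proof
    fix z assume "z \<in> ball v r"
    with that show "z \<in> ball u r"
      using ultrametric_dist_le[of u z v] by simp
  qed
  show ?thesis
    using sub[OF assms] sub[of x y] assms by (auto simp: dist_commute)
qed

lemma ultrametric_ball_eq_iff:
  assumes "r > 0"
  shows "ball (x::'a) r = ball y r \<longleftrightarrow> dist x y < r"
  using assms ultrametric_ball_eq[of y x r] centre_in_ball[of y r] by auto

lemma ultrametric_balls_disjoint:
  assumes "ball (x::'a) r \<noteq> ball y r"
  shows "ball x r \<inter> ball y r = {}"
  using assms ultrametric_ball_eq[of _ x r] ultrametric_ball_eq[of _ y r] by blast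

lemma closed_ultrametric_ball: "closed (ball (x::'a) r)"
proof (cases "r > 0")
  case True
  have "- ball x r = (\<Union>z\<in>- ball x r. ball z r)"
  proof
    show "- ball x r \<subseteq> (\<Union>z\<in>- ball x r. ball z r)"
      using True by auto
    show "(\<Union>z\<in>- ball x r. ball z r) \<subseteq> - ball x r"
      using True ultrametric_balls_disjoint[of _ r x] centre_in_ball[of _ r] by blast
  qed
  then have "open (- ball x r)"
    by (metis open_UN open_ball)
  then show ?thesis
    by (simp add: closed_def)
qed (simp add: ball_empty)

lemma partition_ball_sequence: "is_partition (ball_sequence n :: 'a set set)"
proof (cases "n = 0")
  case False
  then have "\<forall>W\<in>ball_sequence n. W \<noteq> {} \<and> open W \<and> closed (W::'a set)"
    by (auto simp: ball_sequence_def closed_ultrametric_ball)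
  moreover have "\<forall>W\<in>ball_sequence n. \<forall>W'\<in>ball_sequence n. W \<noteq> W' \<longrightarrow> W \<inter> (W'::'a set) = {}"
    using False by (auto simp: ball_sequence_def ultrametric_balls_disjoint)
  moreover have "\<Union>(ball_sequence n) = (UNIV::'a set)"
    using False by (auto simp: ball_sequence_def)
  ultimately show ?thesis
    by (simp add: is_partition_def)
qed (simp add: is_partition_def ball_sequence_def)

lemma mem_ball_sequence_eq_ball:
  assumes "W \<in> ball_sequence n" "n > 0" "(x::'a) \<in> W"
  shows "W = ball x (1 / real n)"
  using assms ultrametric_ball_eq by (auto simp: ball_sequence_def)

lemma defining_sequence_ball_sequence: "defining_sequence (ball_sequence :: nat \<Rightarrow> 'a set set)"
proof -
  have "\<exists>P\<in>ball_sequence n. W \<subseteq> P" if "W \<in> ball_sequence (Suc n)" for n and W :: "'a set"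
  proof (cases "n = 0")
    case False
    obtain c where "W = ball c (1 / real (Suc n))"
      using \<open>W \<in> ball_sequence (Suc n)\<close> by (auto simp: ball_sequence_def)
    moreover have "ball c (1 / real (Suc n)) \<subseteq> ball c (1 / real n)"
      using False by (intro subset_ball) (simp add: frac_le)
    ultimately show ?thesis
      using False by (auto simp: ball_sequence_def)
  qed (simp add: ball_sequence_def)
  moreover have "topological_basis (\<Union>n. ball_sequence n :: 'a set set)"
  proof (rule topological_basisI)
    show "open B" if "B \<in> (\<Union>n. ball_sequence n)" for B :: "'a set"
      using that partition_ball_sequence by (auto simp: is_partition_def)
  next
    fix S :: "'a set" and x assume "open S" "x \<in> S"
    then obtain \<epsilon> where "\<epsilon> > 0" "ball x \<epsilon> \<subseteq> S"
      by (meson open_contains_ball)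
    moreover obtain n :: nat where "n > 0" "1 / real n < \<epsilon>"
      using \<open>\<epsilon> > 0\<close> by (metis ex_inverse_of_nat_less inverse_eq_divide)
    ultimately have "ball x (1 / real n) \<in> ball_sequence n" "ball x (1 / real n) \<subseteq> S"
      by (auto simp: ball_sequence_def)
    with \<open>n > 0\<close> show "\<exists>B\<in>(\<Union>n. ball_sequence n). x \<in> B \<and> B \<subseteq> S"
      by (intro bexI[of _ "ball x (1 / real n)"]) auto
  qed
  ultimately show ?thesis
    using partition_ball_sequence by (simp add: defining_sequence_def)
qed

lemma tame_ball_sequence: "tame_defining_sequence (ball_sequence :: nat \<Rightarrow> 'a set set)"
proof -
  have "\<exists>N. \<forall>n\<ge>N. \<forall>W\<in>ball_sequence n. \<forall>x\<in>W. \<forall>y\<in>W. dist (x::'a) y \<le> \<epsilon>" if "\<epsilon> > 0" for \<epsilon>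
  proof -
    obtain N :: nat where N: "N > 0" "1 / real N < \<epsilon>"
      using \<open>\<epsilon> > 0\<close> by (metis ex_inverse_of_nat_less inverse_eq_divide)
    have "dist x y \<le> \<epsilon>"
      if n: "N \<le> n" and W: "W \<in> ball_sequence n" "x \<in> W" "y \<in> W" for n W and x y :: 'a
    proof -
      have "dist x y < 1 / real n"
        using W mem_ball_sequence_eq_ball[OF W(1) _ W(2)] n N by simp
      also have "\<dots> \<le> 1 / real N"
        using n N by (simp add: frac_le)
      finally show ?thesis
        using N by simp
    qed
    then show ?thesis
      by blast
  qed
  moreover have "\<exists>\<rho>>0. \<forall>W\<in>ball_sequence n. \<forall>W'\<in>ball_sequence n. W \<noteq> W' \<longrightarrow>
      (\<forall>x\<in>W. \<forall>y\<in>W'. dist (x::'a) y \<ge> \<rho>)" for n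
  proof (cases "n = 0")
    case False
    have "dist x y \<ge> 1 / real n"
      if W: "W \<in> ball_sequence n" "x \<in> W" and W': "W' \<in> ball_sequence n" "y \<in> W'" and "W \<noteq> W'"
      for W W' and x y :: 'a
      using mem_ball_sequence_eq_ball[OF W(1) _ W(2)] mem_ball_sequence_eq_ball[OF W'(1) _ W'(2)]
        ultrametric_ball_eq_iff[of "1 / real n" x y] False \<open>W \<noteq> W'\<close> by force
    with False show ?thesis
      by (intro exI[of _ "1 / real n"]) auto
  qed (rule exI[of _ 1], simp add: ball_sequence_def)
  ultimately show ?thesis
    by (simp add: tame_defining_sequence_def)
qed

lemma same_elem_of_ball_sequence_iff:
  "elem_of (ball_sequence n) x = elem_of (ball_sequence n) y \<longleftrightarrow> n = 0 \<or> dist (x::'a) y < 1 / real n"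
proof (cases "n = 0")
  case True
  have "elem_of (ball_sequence 0) z = UNIV" for z :: 'a
    by (rule elem_of_eqI[OF partition_ball_sequence]) (simp_all add: ball_sequence_def)
  with True show ?thesis
    by simp
next
  case False
  then have "elem_of (ball_sequence n) z = ball z (1 / real n)" for z :: 'a
    by (intro elem_of_eqI[OF partition_ball_sequence]) (auto simp: ball_sequence_def)
  with False show ?thesis
    using ultrametric_ball_eq_iff[of "1 / real n"] by simp
qed

lemma u_A_ball_sequence_less_iff:
  assumes "n > 0"
  shows "u_A ball_sequence (x::'a) y < 1 / (1 + real n) \<longleftrightarrow> dist x y < 1 / real n"
proof -
  have "(\<forall>k\<le>n. k = 0 \<or> dist x y < 1 / real k) \<longleftrightarrow> dist x y < 1 / real n"
  proof
    assume "dist x y < 1 / real n"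
    then show "\<forall>k\<le>n. k = 0 \<or> dist x y < 1 / real k"
      by (smt (verit) frac_le not_gr0 of_nat_0_less_iff of_nat_mono)
  qed (use assms in blast)
  then show ?thesis
    by (simp add: u_A_less_iff same_elem_of_ball_sequence_iff)
qed

lemma eventually_u_A_less_iff_eventually_dist_less:
  "(\<forall>\<epsilon>>0. eventually (\<lambda>i. u_A ball_sequence (a i :: 'a) (b i) < \<epsilon>) F) \<longleftrightarrow>
   (\<forall>\<epsilon>>0. eventually (\<lambda>i. dist (a i) (b i) < \<epsilon>) F)"
proof (intro iffI allI impI)
  fix \<epsilon> :: real
  assume u_A_small: "\<forall>\<epsilon>>0. eventually (\<lambda>i. u_A ball_sequence (a i) (b i) < \<epsilon>) F" and "\<epsilon> > 0"
  then obtain n :: nat where n: "n > 0" "1 / real n < \<epsilon>"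
    by (metis ex_inverse_of_nat_less inverse_eq_divide)
  have "eventually (\<lambda>i. u_A ball_sequence (a i) (b i) < 1 / (1 + real n)) F"
    using u_A_small by simp
  then show "eventually (\<lambda>i. dist (a i) (b i) < \<epsilon>) F"
    by (rule eventually_mono) (use n u_A_ball_sequence_less_iff in fastforce)
next
  fix \<epsilon> :: real
  assume dist_small: "\<forall>\<epsilon>>0. eventually (\<lambda>i. dist (a i) (b i) < \<epsilon>) F" and "\<epsilon> > 0"
  then obtain n :: nat where n: "1 / real (Suc n) < \<epsilon>"
    using nat_approx_posE by blast
  have "u_A ball_sequence (a i) (b i) < \<epsilon>" if "dist (a i) (b i) < 1 / real (Suc n)" for i
  proof -
    have "u_A ball_sequence (a i) (b i) < 1 / (1 + real (Suc n))"
      using that u_A_ball_sequence_less_iff[of "Suc n"] by blast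
    also have "\<dots> < 1 / real (Suc n)"
      by (simp add: field_simps)
    finally show ?thesis
      using n by linarith
  qed
  moreover have "eventually (\<lambda>i. dist (a i) (b i) < 1 / real (Suc n)) F"
    using dist_small by simp
  ultimately show "eventually (\<lambda>i. u_A ball_sequence (a i) (b i) < \<epsilon>) F"
    by (simp add: eventually_mono)
qed

lemma u_A_Cauchy_iff_Cauchy:
  "(\<forall>\<epsilon>>0. \<exists>N. \<forall>m\<ge>N. \<forall>n\<ge>N. u_A ball_sequence (f m :: 'a) (f n) < \<epsilon>) \<longleftrightarrow> Cauchy f"
  using eventually_u_A_less_iff_eventually_dist_less
      [of "\<lambda>(n, m). f m" "\<lambda>(n, m). f n" "sequentially \<times>\<^sub>F sequentially"]
  by (simp add: eventually_prod_sequentially Cauchy_def)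

lemma u_A_tendsto_iff_LIMSEQ:
  "(\<forall>\<epsilon>>0. \<exists>N. \<forall>n\<ge>N. u_A ball_sequence (f n :: 'a) x < \<epsilon>) \<longleftrightarrow> f \<longlonglongrightarrow> x"
  using eventually_u_A_less_iff_eventually_dist_less[of f "\<lambda>_. x" sequentially]
  by (simp add: tendsto_iff eventually_sequentially)

lemma u_A_complete_iff_complete:
  "u_A_complete (ball_sequence :: nat \<Rightarrow> 'a set set) \<longleftrightarrow> complete (UNIV :: 'a set)"
  by (simp add: u_A_complete_def complete_def u_A_Cauchy_iff_Cauchy u_A_tendsto_iff_LIMSEQ)

lemma complete_defining_sequence_imp_complete:
  assumes "complete_defining_sequence (ball_sequence :: nat \<Rightarrow> 'a set set)"
  shows "complete (UNIV :: 'a set)"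
  unfolding complete_def
proof (intro allI impI)
  fix f :: "nat \<Rightarrow> 'a"
  assume "(\<forall>n. f n \<in> UNIV) \<and> Cauchy f"
  then obtain N where N: "\<And>n m. n > 0 \<Longrightarrow> m \<ge> N n \<Longrightarrow> f m \<in> ball (f (N n)) (1 / real n)"
    using Cauchy_tail_ballE by blast
  define V where "V n = (if n = 0 then UNIV else ball (f (N n)) (1 / real n))" for n
  have V_in_ball_sequence: "V n \<in> ball_sequence n" for n
    by (simp add: V_def ball_sequence_def)
  have f_in_V: "f m \<in> V n" if "m \<ge> N n" for m n
    using that N by (simp add: V_def)
  have "V (Suc n) \<subseteq> V n" for n
  proof (cases "n = 0")
    case False
    define m where "m = max (N n) (N (Suc n))"
    have "f m \<in> V n" "f m \<in> V (Suc n)"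
      unfolding m_def by (simp_all add: f_in_V)
    then have "V n = ball (f m) (1 / real n)" "V (Suc n) = ball (f m) (1 / real (Suc n))"
      using False V_in_ball_sequence by (simp_all add: mem_ball_sequence_eq_ball del: of_nat_Suc)
    moreover have "ball (f m) (1 / real (Suc n)) \<subseteq> ball (f m) (1 / real n)"
      using False by (intro subset_ball) (simp add: frac_le)
    ultimately show ?thesis
      by simp
  qed (simp add: V_def)
  then have "(\<Inter>n. V n) \<noteq> {}"
    using assms V_in_ball_sequence unfolding complete_defining_sequence_def by simp
  then obtain x where x: "\<And>n. x \<in> V n"
    by blast
  have "f \<longlonglongrightarrow> x"
  proof (rule metric_LIMSEQ_I)
    fix r :: real assume "r > 0"
    then obtain n :: nat where "n > 0" "1 / real n < r"
      by (metis ex_inverse_of_nat_less inverse_eq_divide)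
    have "dist (f m) x < r" if "m \<ge> N n" for m
    proof -
      have "dist (f m) x < 1 / real n"
        using mem_ball_sequence_eq_ball[OF V_in_ball_sequence \<open>n > 0\<close> f_in_V[OF that]] x[of n] by simp
      with \<open>1 / real n < r\<close> show ?thesis
        by simp
    qed
    then show "\<exists>M. \<forall>m\<ge>M. dist (f m) x < r"
      by blast
  qed
  then show "\<exists>x\<in>UNIV. f \<longlonglongrightarrow> x"
    by blast
qed

lemma complete_imp_complete_defining_sequence:
  assumes "complete (UNIV :: 'a set)"
  shows "complete_defining_sequence (ball_sequence :: nat \<Rightarrow> 'a set set)"
  unfolding complete_defining_sequence_def
proof (intro allI impI)
  fix V :: "nat \<Rightarrow> 'a set"
  assume V_nested: "(\<forall>n. V n \<in> ball_sequence n) \<and> (\<forall>n. V (Suc n) \<subseteq> V n)"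
  then have V: "V n \<in> ball_sequence n" for n
    by blast
  have V_antimono: "V m \<subseteq> V n" if "n \<le> m" for m n
    by (rule lift_Suc_antimono_le[of V]) (use V_nested that in auto)
  have "V n \<noteq> {}" for n
    using partition_ball_sequence[of n] V[of n] by (simp add: is_partition_def)
  define x where "x n = (SOME y. y \<in> V n)" for n
  have x: "x n \<in> V n" for n
    using \<open>V n \<noteq> {}\<close> by (simp add: x_def some_in_eq)
  have x_in_V: "x m \<in> V n" if "m \<ge> n" for m n
    using x V_antimono that by blast
  have "Cauchy x"
  proof (rule metric_CauchyI)
    fix r :: real assume "r > 0"
    then obtain n :: nat where n: "n > 0" "1 / real n < r"
      by (metis ex_inverse_of_nat_less inverse_eq_divide)
    have "dist (x m) (x k) < r" if "m \<ge> n" "k \<ge> n" for m k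
    proof -
      have "dist (x m) (x k) < 1 / real n"
        using mem_ball_sequence_eq_ball[OF V \<open>n > 0\<close> x_in_V[OF that(1)]] x_in_V[OF that(2)] by simp
      with n show ?thesis
        by simp
    qed
    then show "\<exists>M. \<forall>m\<ge>M. \<forall>k\<ge>M. dist (x m) (x k) < r"
      by blast
  qed
  then obtain y where "x \<longlonglongrightarrow> y"
    using assms unfolding complete_def by blast
  have "y \<in> V n" for n
  proof (rule Lim_in_closed_set[of "V n"])
    show "closed (V n)"
      using partition_ball_sequence[of n] V[of n] by (simp add: is_partition_def)
    show "eventually (\<lambda>m. x m \<in> V n) sequentially"
      using x_in_V by (auto simp: eventually_sequentially)
  qed (use \<open>x \<longlonglongrightarrow> y\<close> in simp_all)
  then show "(\<Inter>n. V n) \<noteq> {}"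
    by blast
qed

lemma complete_defining_sequence_ball_sequence_iff:
  "complete_defining_sequence (ball_sequence :: nat \<Rightarrow> 'a set set) \<longleftrightarrow> complete (UNIV :: 'a set)"
  using complete_defining_sequence_imp_complete complete_imp_complete_defining_sequence by blast

end

theorem proposition3p11:
  assumes "ultrametric_space TYPE('a::metric_space)"
  shows "defining_sequence (ball_sequence :: nat \<Rightarrow> 'a set set) \<and>
         tame_defining_sequence (ball_sequence :: nat \<Rightarrow> 'a set set) \<and>
         (complete_defining_sequence (ball_sequence :: nat \<Rightarrow> 'a set set) \<longleftrightarrow>
          u_A_complete (ball_sequence :: nat \<Rightarrow> 'a set set))"
  using defining_sequence_ball_sequence[OF assms] tame_ball_sequence[OF assms]
    complete_defining_sequence_ball_sequence_iff[OF assms] u_A_complete_iff_complete[OF assms]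
  by simp

end
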